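(* Let $\mathcal{D}$ be the set of partitions into distinct parts, $\mathcal{D}_o$ the set of partitions into an odd number of distinct parts, $\nu(\pi)$ the number of parts of $\pi$, and for $\pi=(\lambda_1,\lambda_2,\dots)$, $\mathcal{O}(\pi)=\lambda_1+\lambda_3+\lambda_5+\cdots$. Let $\tilde C_{\le -1}$ and $\tilde C_{=0}$ be the sets of partitions with crank $\le -1$ and crank $=0$ respectively. Then, as formal power series, \[\sum_{\pi\in\mathcal{D}_o}q^{\mathcal{O}(\pi)}=\sum_{\pi\in\tilde C_{\le-1}}q^{|\pi|}\quad\text{and}\quad\sum_{\pi\in\mathcal{D}}(-1)^{\nu(\pi)}q^{\mathcal{O}(\pi)}=-q+\sum_{\pi\in\tilde C_{=0}}q^{|\pi|}.\]
   Context: A partition is a finite weakly decreasing sequence of positive integers; $|\pi|$ is the sum of its parts; the empty partition has $0$ parts. The crank of a partition $\pi$ is defined as: the largest part of $\pi$ if $1$ is not a part of $\pi$ (the empty partition has crank $0$); otherwise, (the number of parts of $\pi$ larger than the number of $1$'s in $\pi$) minus (the number of $1$'s in $\pi$). *)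

theory Defs
  imports "HOL-Computational_Algebra.Formal_Power_Series"
begin

definition is_partition :: "nat list \<Rightarrow> bool" where
  "is_partition p \<longleftrightarrow> sorted_wrt (\<ge>) p \<and> (\<forall>x\<in>set p. 0 < x)"

definition is_distinct_partition :: "nat list \<Rightarrow> bool" where
  "is_distinct_partition p \<longleftrightarrow> sorted_wrt (>) p \<and> (\<forall>x\<in>set p. 0 < x)"

abbreviation nparts :: "nat list \<Rightarrow> nat" where "nparts p \<equiv> length p"
abbreviation psize :: "nat list \<Rightarrow> nat" where "psize p \<equiv> sum_list p"

text \<open>Sum of the parts in odd positions (1st, 3rd, 5th, ...), i.e. 0-based even indices.\<close>
definition odd_pos_sum :: "nat list \<Rightarrow> nat" where
  "odd_pos_sum p = sum_list (map (\<lambda>i. p ! i) (filter even [0..<length p]))"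

definition ones :: "nat list \<Rightarrow> nat" where
  "ones p = length (filter (\<lambda>x. x = 1) p)"

definition crank :: "nat list \<Rightarrow> int" where
  "crank p = (if 1 \<notin> set p then (if p = [] then 0 else int (Max (set p)))
              else int (length (filter (\<lambda>x. x > ones p) p)) - int (ones p))"

end

theory Submission
  imports Defs
begin

unbundle fps_syntax

text \<open>
  Both identities are proved by comparing generating functions summand by summand.  Write
  W_N = 1/(q;q)_N for the generating function of partitions into at most N parts.

  A distinct partition with l parts is coded by a sequence whose entries at even and at odd
  positions form two partitions with at most ceil(l/2) and floor(l/2) parts, and its
  odd-position sum is the size of the code plus ceil(l/2) * ceil((l+1)/2).  So the partitions
  with 2m+1 parts contribute q^((m+1)^2) W_(m+1) W_m and those with 2m parts contribute
  q^(m(m+1)) W_m^2.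

  A partition of crank at most -1 is uniquely the concatenation of m parts >= m+1, a partition
  into parts from [1, m+1] and m+1 ones, where m+1 is the least d such that fewer than d parts
  exceed d.  By conjugation this again contributes q^((m+1)^2) W_m W_(m+1).  A partition of
  crank 0 with k ones consists of k parts > k, parts from [2, k] and k ones, contributing
  q^(k^2+2k) (1 - q) W_k^2 for k >= 1.  The second identity is then a telescoping sum, driven by
  W_(k-1) = (1 - q^k) W_k.
\<close>

section \<open>Generating functions of weighted sets\<close>

definition finite_fibres :: "'a set \<Rightarrow> ('a \<Rightarrow> nat) \<Rightarrow> bool" where
  "finite_fibres A w \<longleftrightarrow> (\<forall>n. finite {x\<in>A. w x = n})"

definition gen_fun :: "'a set \<Rightarrow> ('a \<Rightarrow> nat) \<Rightarrow> 'b::comm_semiring_1 fps" where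
  "gen_fun A w = Abs_fps (\<lambda>n. of_nat (card {x\<in>A. w x = n}))"

lemma bij_betw_fibres:
  assumes "bij_betw h A B" "\<And>x. x \<in> A \<Longrightarrow> w (h x) = v x"
  shows "bij_betw h {x\<in>A. v x = n} {y\<in>B. w y = n}"
proof -
  have "h ` {x\<in>A. v x = n} = {y\<in>B. w y = n}"
    using assms by (force simp: bij_betw_def)
  moreover have "inj_on h {x\<in>A. v x = n}"
    using assms(1) by (auto simp: bij_betw_def intro: inj_on_subset)
  ultimately show ?thesis by (simp add: bij_betw_def)
qed

lemma gen_fun_bij:
  assumes "bij_betw h A B" "\<And>x. x \<in> A \<Longrightarrow> w (h x) = v x"
  shows "gen_fun B w = gen_fun A v"
  using bij_betw_same_card[OF bij_betw_fibres[of h A B w v, OF assms]] by (simp add: gen_fun_def)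

lemma finite_fibres_bij:
  assumes "bij_betw h A B" "\<And>x. x \<in> A \<Longrightarrow> w (h x) = v x"
  shows "finite_fibres B w \<longleftrightarrow> finite_fibres A v"
  using bij_betw_finite[OF bij_betw_fibres[of h A B w v, OF assms]] by (simp add: finite_fibres_def)

lemma gen_fun_image:
  assumes "inj_on h A" "\<And>x. x \<in> A \<Longrightarrow> w (h x) = v x"
  shows "gen_fun (h ` A) w = gen_fun A v"
  using gen_fun_bij[of h A "h ` A" w v] inj_on_imp_bij_betw[OF assms(1)] assms(2) by blast

lemma gen_fun_shift: "gen_fun A (\<lambda>x. w x + c) = fps_X ^ c * gen_fun A w"
proof (rule fps_ext)
  fix n
  have "{x\<in>A. w x + c = n} = (if c \<le> n then {x\<in>A. w x = n - c} else {})"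
    by auto
  then show "gen_fun A (\<lambda>x. w x + c) $ n = (fps_X ^ c * gen_fun A w) $ n"
    by (simp add: gen_fun_def fps_X_power_mult_nth)
qed

lemma finite_fibres_shift:
  assumes "finite_fibres A w"
  shows "finite_fibres A (\<lambda>x. w x + c)"
proof -
  have "finite {x\<in>A. w x + c = n}" for n
    by (rule finite_subset[of _ "{x\<in>A. w x = n - c}"]) (use assms in \<open>auto simp: finite_fibres_def\<close>)
  then show ?thesis by (simp add: finite_fibres_def)
qed

lemma fibre_Times:
  fixes f :: "'a \<Rightarrow> nat" and g :: "'b \<Rightarrow> nat"
  shows "{z \<in> A \<times> B. (\<lambda>(x, y). f x + g y) z = n} = (\<Union>i\<le>n. {x\<in>A. f x = i} \<times> {y\<in>B. g y = n - i})"
  by auto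

lemma finite_fibres_Times:
  assumes "finite_fibres A f" "finite_fibres B g"
  shows "finite_fibres (A \<times> B) (\<lambda>(x, y). f x + g y)"
  using assms unfolding finite_fibres_def fibre_Times by blast

lemma gen_fun_Times:
  assumes "finite_fibres A f" "finite_fibres B g"
  shows "gen_fun (A \<times> B) (\<lambda>(x, y). f x + g y) = gen_fun A f * gen_fun B g"
proof (rule fps_ext)
  fix n
  have "card (\<Union>i\<le>n. {x\<in>A. f x = i} \<times> {y\<in>B. g y = n - i})
      = (\<Sum>i\<le>n. card {x\<in>A. f x = i} * card {y\<in>B. g y = n - i})"
    by (subst card_UN_disjoint) (use assms in \<open>auto simp: finite_fibres_def card_cartesian_product\<close>)
  then show "gen_fun (A \<times> B) (\<lambda>(x, y). f x + g y) $ n = (gen_fun A f * gen_fun B g) $ n"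
    unfolding gen_fun_def fibre_Times by (simp add: fps_mult_nth atLeast0AtMost)
qed

lemma finite_fibres_subset:
  assumes "A \<subseteq> B" "finite_fibres B w"
  shows "finite_fibres A w"
proof -
  have "finite {x\<in>A. w x = n}" for n
  proof (rule finite_subset)
    show "{x\<in>A. w x = n} \<subseteq> {x\<in>B. w x = n}" using assms(1) by blast
    show "finite {x\<in>B. w x = n}" using assms(2) by (simp add: finite_fibres_def)
  qed
  then show ?thesis by (simp add: finite_fibres_def)
qed

lemma gen_fun_Un_disjoint:
  assumes "A \<inter> B = {}" "finite_fibres A w" "finite_fibres B w"
  shows "gen_fun (A \<union> B) w = gen_fun A w + gen_fun B w"
proof (rule fps_ext)
  fix n
  have "{x \<in> A \<union> B. w x = n} = {x\<in>A. w x = n} \<union> {x\<in>B. w x = n}" by auto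
  moreover have "card ({x\<in>A. w x = n} \<union> {x\<in>B. w x = n}) = card {x\<in>A. w x = n} + card {x\<in>B. w x = n}"
    by (rule card_Un_disjoint) (use assms in \<open>auto simp: finite_fibres_def\<close>)
  ultimately show "gen_fun (A \<union> B) w $ n = (gen_fun A w + gen_fun B w) $ n"
    by (simp add: gen_fun_def)
qed

lemma gen_fun_split:
  assumes "A = B \<union> C" "B \<inter> C = {}" "finite_fibres A w"
  shows "gen_fun A w = gen_fun B w + gen_fun C w"
proof -
  have "finite_fibres B w" "finite_fibres C w"
    using finite_fibres_subset[OF _ assms(3)] assms(1) by blast+
  then show ?thesis using gen_fun_Un_disjoint[OF assms(2)] assms(1) by simp
qed

lemma gen_fun_singleton: "gen_fun {a} w = fps_X ^ w a"
proof (rule fps_ext)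
  fix n
  have "{x\<in>{a}. w x = n} = (if w a = n then {a} else {})" by auto
  then have "card {x\<in>{a}. w x = n} = (if w a = n then 1 else 0)" by simp
  then show "gen_fun {a} w $ n = fps_X ^ w a $ n" unfolding gen_fun_def fps_nth_Abs_fps by simp
qed

lemma fibre_UN:
  fixes w :: "'a \<Rightarrow> nat"
  assumes "\<And>i x. x \<in> A i \<Longrightarrow> i \<le> w x"
  shows "{x \<in> (\<Union>i. A i). w x = n} = (\<Union>i\<le>n. {x \<in> A i. w x = n})"
  using assms by blast

lemma finite_fibres_UN:
  assumes "\<And>i x. x \<in> A i \<Longrightarrow> i \<le> w x" "\<And>i. finite_fibres (A i) w"
  shows "finite_fibres (\<Union>i. A i) w"
proof -
  have f: "{x \<in> (\<Union>i. A i). w x = n} = (\<Union>i\<le>n. {x \<in> A i. w x = n})" for n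
    using assms(1) by (rule fibre_UN)
  have "finite {x \<in> (\<Union>i. A i). w x = n}" for n
    unfolding f using assms(2) by (simp add: finite_fibres_def)
  then show ?thesis by (simp add: finite_fibres_def)
qed

lemma gen_fun_UN_nth:
  assumes "\<And>i j. i \<noteq> j \<Longrightarrow> A i \<inter> A j = {}" "\<And>i x. x \<in> A i \<Longrightarrow> i \<le> w x"
    and "\<And>i. finite_fibres (A i) w"
  shows "gen_fun (\<Union>i. A i) w $ n = (\<Sum>i\<le>n. gen_fun (A i) w) $ n"
proof -
  have f: "{x \<in> (\<Union>i. A i). w x = n} = (\<Union>i\<le>n. {x \<in> A i. w x = n})"
    using assms(2) by (rule fibre_UN)
  have "card {x \<in> (\<Union>i. A i). w x = n} = (\<Sum>i\<le>n. card {x \<in> A i. w x = n})"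
    unfolding f
  proof (rule card_UN_disjoint)
    show "\<forall>i\<in>{..n}. finite {x \<in> A i. w x = n}"
      using assms(3) by (simp add: finite_fibres_def)
    show "\<forall>i\<in>{..n}. \<forall>j\<in>{..n}. i \<noteq> j \<longrightarrow> {x \<in> A i. w x = n} \<inter> {x \<in> A j. w x = n} = {}"
    proof (intro ballI impI)
      fix i j :: nat assume "i \<noteq> j"
      then have "A i \<inter> A j = {}" by (rule assms(1))
      then show "{x \<in> A i. w x = n} \<inter> {x \<in> A j. w x = n} = {}" by blast
    qed
  qed simp
  then show ?thesis by (simp add: gen_fun_def fps_sum_nth)
qed

section \<open>Partitions with few parts or with bounded parts\<close>

(* A partition into at most N parts, padded with zeros to length N. *)
definition padded_partitions :: "nat \<Rightarrow> nat list set" where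
  "padded_partitions N = {xs. length xs = N \<and> sorted_wrt (\<ge>) xs}"

definition parts_between :: "nat \<Rightarrow> nat \<Rightarrow> nat list set" where
  "parts_between a b = {xs. sorted_wrt (\<ge>) xs \<and> (\<forall>x\<in>set xs. a \<le> x \<and> x \<le> b)}"

definition at_most_fps :: "nat \<Rightarrow> int fps" where
  "at_most_fps N = gen_fun (padded_partitions N) sum_list"

lemma finite_fibres_padded_partitions: "finite_fibres (padded_partitions N) sum_list"
proof -
  have "finite {xs \<in> padded_partitions N. sum_list xs = n}" for n
  proof (rule finite_subset)
    show "{xs \<in> padded_partitions N. sum_list xs = n} \<subseteq> {xs. set xs \<subseteq> {..n} \<and> length xs = N}"
      by (auto simp: padded_partitions_def member_le_sum_list)
  qed (simp add: finite_lists_length_eq)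
  then show ?thesis by (simp add: finite_fibres_def)
qed

lemma length_le_sum_list: "\<forall>x\<in>set xs. 1 \<le> x \<Longrightarrow> length xs \<le> sum_list (xs :: nat list)"
  by (induct xs) auto

lemma finite_fibres_partitions: "finite_fibres {p. is_partition p} sum_list"
proof -
  have "finite {p \<in> {p. is_partition p}. sum_list p = n}" for n
  proof (rule finite_subset)
    show "{p \<in> {p. is_partition p}. sum_list p = n} \<subseteq> {xs. set xs \<subseteq> {..n} \<and> length xs \<le> n}"
      by (auto simp: is_partition_def member_le_sum_list Suc_le_eq intro!: length_le_sum_list)
  qed (simp add: finite_lists_length_le)
  then show ?thesis by (simp add: finite_fibres_def)
qed

lemma finite_fibres_parts_between: "1 \<le> a \<Longrightarrow> finite_fibres (parts_between a b) sum_list"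
  by (rule finite_fibres_subset[OF _ finite_fibres_partitions]) (auto simp: parts_between_def is_partition_def)

lemma sorted_wrt_ge_last:
  assumes "sorted_wrt (\<ge>) xs" "x \<in> set xs"
  shows "last xs \<le> (x :: nat)"
  using assms by (induct xs) (auto simp: last_in_set)

lemma padded_partitions_Suc:
  "padded_partitions (Suc N)
     = (\<lambda>xs. xs @ [0]) ` padded_partitions N \<union> map Suc ` padded_partitions (Suc N)"
proof (intro equalityI subsetI)
  fix xs assume xs: "xs \<in> padded_partitions (Suc N)"
  then have srt: "sorted_wrt (\<ge>) xs" and len: "length xs = Suc N"
    by (auto simp: padded_partitions_def)
  show "xs \<in> (\<lambda>xs. xs @ [0]) ` padded_partitions N \<union> map Suc ` padded_partitions (Suc N)"
  proof (cases "0 \<in> set xs")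
    case True
    then have "last xs = 0" using sorted_wrt_ge_last[OF srt] by fastforce
    then have "xs = butlast xs @ [0]" using len by (metis append_butlast_last_id list.size(3) nat.distinct(1))
    moreover have "butlast xs \<in> padded_partitions N"
      using srt len by (auto simp: padded_partitions_def butlast_conv_take sorted_wrt_take)
    ultimately show ?thesis by blast
  next
    case False
    then have "xs = map Suc (map (\<lambda>x. x - 1) xs)"
      by (induct xs) auto
    moreover have "map (\<lambda>x. x - 1) xs \<in> padded_partitions (Suc N)"
      using srt len by (auto simp: padded_partitions_def sorted_wrt_map elim!: sorted_wrt_mono_rel[rotated])
    ultimately show ?thesis by blast
  qed
qed (auto simp: padded_partitions_def sorted_wrt_append sorted_wrt_map)

lemma one_minus_mult_eq:
  fixes F G H :: "'a::comm_ring_1"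
  assumes "F = G + H * F"
  shows "(1 - H) * F = G"
proof -
  have "(1 - H) * F = F - H * F" by (simp add: algebra_simps)
  also have "\<dots> = G" by (subst (1) assms) simp
  finally show ?thesis .
qed

lemma sum_list_map_Suc: "sum_list (map Suc xs) = sum_list xs + length xs"
  by (induct xs) auto

lemma at_most_fps_0: "at_most_fps 0 = 1"
proof -
  have "padded_partitions 0 = {[]}" by (auto simp: padded_partitions_def)
  then show ?thesis by (simp add: at_most_fps_def gen_fun_singleton)
qed

lemma at_most_fps_Suc: "(1 - fps_X ^ Suc N) * at_most_fps (Suc N) = at_most_fps N"
proof (rule one_minus_mult_eq)
  let ?P = "padded_partitions"
  let ?A = "(\<lambda>xs. xs @ [0]) ` ?P N" and ?B = "map Suc ` ?P (Suc N)"
  have "ys @ [0] \<noteq> map Suc zs" for ys zs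
  proof
    assume "ys @ [0] = map Suc zs"
    then have "0 \<in> set (map Suc zs)" by (metis in_set_conv_decomp)
    then show False by auto
  qed
  then have disj: "?A \<inter> ?B = {}" by blast
  have "at_most_fps (Suc N) = gen_fun ?A sum_list + gen_fun ?B sum_list"
    unfolding at_most_fps_def
    by (rule gen_fun_split[OF padded_partitions_Suc disj finite_fibres_padded_partitions])
  also have "gen_fun ?A sum_list = at_most_fps N"
    unfolding at_most_fps_def by (rule gen_fun_image) (auto intro: inj_onI)
  also have "gen_fun ?B sum_list = fps_X ^ Suc N * at_most_fps (Suc N)"
    unfolding at_most_fps_def gen_fun_shift[symmetric]
    by (rule gen_fun_image) (auto intro: inj_onI simp: sum_list_map_Suc padded_partitions_def)
  finally show "at_most_fps (Suc N) = at_most_fps N + fps_X ^ Suc N * at_most_fps (Suc N)" .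
qed

lemma parts_between_Suc:
  "parts_between 1 (Suc N) = parts_between 1 N \<union> (#) (Suc N) ` parts_between 1 (Suc N)"
proof (intro equalityI subsetI)
  fix xs assume xs: "xs \<in> parts_between 1 (Suc N)"
  then have srt: "sorted_wrt (\<ge>) xs" and bnd: "\<forall>x\<in>set xs. 1 \<le> x \<and> x \<le> Suc N"
    by (auto simp: parts_between_def)
  show "xs \<in> parts_between 1 N \<union> (#) (Suc N) ` parts_between 1 (Suc N)"
  proof (cases "Suc N \<in> set xs")
    case True
    then obtain y ys where xs_eq: "xs = y # ys" by (cases xs) auto
    then have "y = Suc N" using True srt bnd by force
    moreover have "ys \<in> parts_between 1 (Suc N)" using xs_eq xs by (simp add: parts_between_def)
    ultimately show ?thesis using xs_eq by blast
  next
    case False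
    then have "x \<le> N" if "x \<in> set xs" for x
      using bnd that by (metis le_SucE)
    then have "xs \<in> parts_between 1 N" using srt bnd by (simp add: parts_between_def)
    then show ?thesis by blast
  qed
qed (auto simp: parts_between_def)

lemma parts_between_1_split:
  assumes "1 \<le> k"
  shows "parts_between 1 k = parts_between 2 k \<union> (\<lambda>xs. xs @ [1]) ` parts_between 1 k"
proof (intro equalityI subsetI)
  fix xs assume xs: "xs \<in> parts_between 1 k"
  then have srt: "sorted_wrt (\<ge>) xs" and bnd: "\<forall>x\<in>set xs. 1 \<le> x \<and> x \<le> k"
    by (auto simp: parts_between_def)
  show "xs \<in> parts_between 2 k \<union> (\<lambda>xs. xs @ [1]) ` parts_between 1 k"
  proof (cases "1 \<in> set xs")
    case True
    then have "xs \<noteq> []" by auto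
    moreover have "last xs = 1"
      using sorted_wrt_ge_last[OF srt True] bnd last_in_set[OF \<open>xs \<noteq> []\<close>] by force
    ultimately have "xs = butlast xs @ [1]" by (metis append_butlast_last_id)
    moreover have "butlast xs \<in> parts_between 1 k"
      using srt bnd by (auto simp: parts_between_def butlast_conv_take sorted_wrt_take dest: in_set_takeD)
    ultimately show ?thesis by blast
  next
    case False
    then have "2 \<le> x" if "x \<in> set xs" for x
      using bnd that by (metis Suc_1 Suc_le_eq le_neq_implies_less)
    then have "xs \<in> parts_between 2 k" using srt bnd by (simp add: parts_between_def)
    then show ?thesis by blast
  qed
qed (use assms in \<open>auto simp: parts_between_def sorted_wrt_append\<close>)

lemma gen_fun_parts_between_1_Suc:
  "(1 - fps_X ^ Suc N) * gen_fun (parts_between 1 (Suc N)) sum_list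
     = (gen_fun (parts_between 1 N) sum_list :: int fps)"
proof (rule one_minus_mult_eq)
  let ?A = "(#) (Suc N) ` parts_between 1 (Suc N)"
  have "Suc N # ys \<notin> parts_between 1 N" for ys
    by (simp add: parts_between_def)
  then have disj: "parts_between 1 N \<inter> ?A = {}" by blast
  have "gen_fun (parts_between 1 (Suc N)) sum_list
      = gen_fun (parts_between 1 N) sum_list + (gen_fun ?A sum_list :: int fps)"
    by (rule gen_fun_split[OF parts_between_Suc disj finite_fibres_parts_between]) simp
  also have "gen_fun ?A sum_list = fps_X ^ Suc N * gen_fun (parts_between 1 (Suc N)) sum_list"
    unfolding gen_fun_shift[symmetric] by (rule gen_fun_image) (auto intro: inj_onI)
  finally show "gen_fun (parts_between 1 (Suc N)) sum_list
      = gen_fun (parts_between 1 N) sum_list + fps_X ^ Suc N * (gen_fun (parts_between 1 (Suc N)) sum_list :: int fps)" .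
qed

lemma one_minus_fps_X_power_neq_0: "(1 - fps_X ^ Suc N :: 'a::comm_ring_1 fps) \<noteq> 0"
proof
  assume "(1 - fps_X ^ Suc N :: 'a fps) = 0"
  then have "(1 - fps_X ^ Suc N :: 'a fps) $ 0 = 0" by simp
  then show False by simp
qed

lemma gen_fun_parts_between_1: "gen_fun (parts_between 1 N) sum_list = at_most_fps N"
proof (induct N)
  case 0
  have "xs = []" if "xs \<in> parts_between 1 0" for xs
    using that by (cases xs) (auto simp: parts_between_def)
  then have "parts_between 1 0 = {[]}" by (auto simp: parts_between_def)
  moreover have "padded_partitions 0 = {[]}" by (auto simp: padded_partitions_def)
  ultimately show ?case by (simp add: at_most_fps_def gen_fun_singleton)
next
  case (Suc N)
  have "(1 - fps_X ^ Suc N) * gen_fun (parts_between 1 (Suc N)) sum_list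
      = (1 - fps_X ^ Suc N) * at_most_fps (Suc N)"
    unfolding gen_fun_parts_between_1_Suc at_most_fps_Suc Suc ..
  then show ?case by (rule mult_left_cancel[OF one_minus_fps_X_power_neq_0, THEN iffD1])
qed

lemma gen_fun_parts_between_2:
  assumes "1 \<le> k"
  shows "gen_fun (parts_between 2 k) sum_list = (1 - fps_X) * at_most_fps k"
proof -
  let ?G = "gen_fun (parts_between 1 k) sum_list :: int fps"
  have "xs @ [1] \<notin> parts_between 2 k" for xs
    by (simp add: parts_between_def)
  then have disj: "parts_between 2 k \<inter> (\<lambda>xs. xs @ [1]) ` parts_between 1 k = {}"
    by blast
  have "?G = gen_fun (parts_between 2 k) sum_list + gen_fun ((\<lambda>xs. xs @ [1]) ` parts_between 1 k) sum_list"
    by (rule gen_fun_split[OF parts_between_1_split[OF assms] disj finite_fibres_parts_between]) simp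
  also have "gen_fun ((\<lambda>xs. xs @ [1]) ` parts_between 1 k) sum_list = fps_X ^ 1 * ?G"
    unfolding gen_fun_shift[symmetric] by (rule gen_fun_image) (auto intro: inj_onI)
  finally have "(1 - fps_X ^ 1) * ?G = gen_fun (parts_between 2 k) sum_list"
    by (rule one_minus_mult_eq)
  then show ?thesis unfolding gen_fun_parts_between_1 by simp
qed

lemma gen_fun_parts_between_2_0: "gen_fun (parts_between 2 0) sum_list = 1"
proof -
  have "xs = []" if "xs \<in> parts_between 2 0" for xs
    using that by (cases xs) (auto simp: parts_between_def)
  then have "parts_between 2 0 = {[]}" by (auto simp: parts_between_def)
  then show ?thesis by (simp add: gen_fun_singleton)
qed

section \<open>Distinct partitions weighted by the odd-position sum\<close>

lemma upt_0_Suc_Suc: "[0..<Suc (Suc n)] = 0 # 1 # map (\<lambda>i. i + 2) [0..<n]"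
  by (induct n) auto

lemma odd_pos_sum_Nil [simp]: "odd_pos_sum [] = 0"
  by (simp add: odd_pos_sum_def)

lemma odd_pos_sum_singleton [simp]: "odd_pos_sum [x] = x"
  by (simp add: odd_pos_sum_def)

lemma odd_pos_sum_Cons_Cons [simp]: "odd_pos_sum (x # y # zs) = x + odd_pos_sum zs"
proof -
  have "filter even [0..<length (x # y # zs)] = 0 # map (\<lambda>i. i + 2) (filter even [0..<length zs])"
    by (simp only: length_Cons upt_0_Suc_Suc) (simp add: filter_map o_def)
  then show ?thesis by (simp add: odd_pos_sum_def o_def)
qed

fun hd0 :: "nat list \<Rightarrow> nat" where
  "hd0 [] = 0"
| "hd0 (x # _) = x"

(* A strictly decreasing \<lambda>_1 > ... > \<lambda>_l is coded by v with \<lambda>_i = v_i + v_(i+1) + (l - i + 1)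
   and v_(l+1) = 0.  Then \<lambda>_i - \<lambda>_(i+1) = v_i - v_(i+2) + 1, so \<lambda> is strictly decreasing iff
   v_(i+2) <= v_i, i.e. iff the entries of v at even and at odd positions are both weakly
   decreasing. *)
fun distinct_of_code :: "nat list \<Rightarrow> nat list" where
  "distinct_of_code [] = []"
| "distinct_of_code (v # vs) = (v + hd0 vs + length vs + 1) # distinct_of_code vs"

fun code_of_distinct :: "nat list \<Rightarrow> nat list" where
  "code_of_distinct [] = []"
| "code_of_distinct (x # xs) = (x - hd0 (code_of_distinct xs) - length xs - 1) # code_of_distinct xs"

fun skip_sorted :: "nat list \<Rightarrow> bool" where
  "skip_sorted (a # b # c # xs) \<longleftrightarrow> c \<le> a \<and> skip_sorted (b # c # xs)"
| "skip_sorted _ \<longleftrightarrow> True"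

lemma skip_sorted_Cons: "skip_sorted (v # vs) \<longleftrightarrow> hd0 (tl vs) \<le> v \<and> skip_sorted vs"
  by (cases vs rule: skip_sorted.cases) auto

lemma length_distinct_of_code [simp]: "length (distinct_of_code vs) = length vs"
  by (induct vs) auto

lemma length_code_of_distinct [simp]: "length (code_of_distinct xs) = length xs"
  by (induct xs) auto

lemma code_of_distinct_of_code [simp]: "code_of_distinct (distinct_of_code vs) = vs"
  by (induct vs) auto

lemma distinct_partition_distinct_of_code:
  "skip_sorted vs \<Longrightarrow> is_distinct_partition (distinct_of_code vs)"
proof (induct vs)
  case Nil
  then show ?case by (simp add: is_distinct_partition_def)
next
  case (Cons v vs)
  then have skip: "skip_sorted vs" and hd: "hd0 (tl vs) \<le> v"
    by (auto simp: skip_sorted_Cons)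
  have IH: "is_distinct_partition (distinct_of_code vs)" using Cons.hyps skip .
  have "y < v + hd0 vs + length vs + 1" if "y \<in> set (distinct_of_code vs)" for y
  proof (cases vs)
    case (Cons b ws)
    have "y \<le> hd0 (distinct_of_code vs)"
      using IH that Cons by (auto simp: is_distinct_partition_def less_imp_le)
    then show ?thesis using Cons hd by auto
  qed (use that in simp)
  then show ?case using IH by (auto simp: is_distinct_partition_def)
qed

lemma distinct_of_code_of_distinct:
  "is_distinct_partition xs
     \<Longrightarrow> distinct_of_code (code_of_distinct xs) = xs \<and> skip_sorted (code_of_distinct xs)"
proof (induct xs)
  case Nil
  then show ?case by simp
next
  case (Cons x xs)
  have "is_distinct_partition xs" and gt: "\<forall>y\<in>set xs. y < x" and "0 < x"
    using Cons.prems by (auto simp: is_distinct_partition_def)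
  with Cons.hyps have IH: "distinct_of_code (code_of_distinct xs) = xs" "skip_sorted (code_of_distinct xs)"
    by auto
  define vs where "vs = code_of_distinct xs"
  have room: "hd0 vs + hd0 (tl vs) + length xs + 1 \<le> x"
  proof (cases xs)
    case Nil
    then show ?thesis using \<open>0 < x\<close> vs_def by simp
  next
    case (Cons y ys)
    then obtain v ws where vs: "vs = v # ws" using vs_def by (cases vs) auto
    have "y = v + hd0 ws + length ws + 1" using IH(1) Cons vs vs_def by auto
    moreover have "length ws = length ys" using vs Cons vs_def by (metis length_Cons length_code_of_distinct nat.inject)
    moreover have "y < x" using gt Cons by simp
    ultimately show ?thesis using vs Cons by simp
  qed
  show ?case using room IH vs_def by (simp add: skip_sorted_Cons)
qed

text \<open>The odd-position sum of the staircase \<open>[l, l - 1, \<dots>, 1]\<close>.\<close>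
definition staircase_odd_sum :: "nat \<Rightarrow> nat" where
  "staircase_odd_sum l = ((l + 1) div 2) * ((l + 2) div 2)"

lemma staircase_odd_sum_Suc_Suc: "staircase_odd_sum (Suc (Suc l)) = staircase_odd_sum l + l + 2"
  unfolding staircase_odd_sum_def by (cases "even l") (auto elim!: evenE oddE simp: algebra_simps)

lemma odd_pos_sum_distinct_of_code:
  "odd_pos_sum (distinct_of_code vs) = sum_list vs + staircase_odd_sum (length vs)"
  by (induct vs rule: induct_list012) (simp_all add: staircase_odd_sum_def staircase_odd_sum_Suc_Suc)

fun evens :: "'a list \<Rightarrow> 'a list" and odds :: "'a list \<Rightarrow> 'a list" where
  "evens [] = []"
| "evens (x # xs) = x # odds xs"
| "odds [] = []"
| "odds (x # xs) = evens xs"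

function interleave :: "'a list \<Rightarrow> 'a list \<Rightarrow> 'a list" where
  "interleave [] ys = ys"
| "interleave (x # xs) ys = x # interleave ys xs"
  by pat_completeness auto
termination by (relation "measure (\<lambda>(xs, ys). length xs + length ys)") auto

lemma length_evens_odds: "length (evens xs) = (length xs + 1) div 2 \<and> length (odds xs) = length xs div 2"
  by (induct xs) auto

lemma interleave_evens_odds: "interleave (evens xs) (odds xs) = xs"
  by (induct xs) auto

lemma length_interleave [simp]: "length (interleave xs ys) = length xs + length ys"
  by (induct xs ys rule: interleave.induct) auto

lemma sum_list_interleave [simp]: "sum_list (interleave xs ys) = sum_list xs + sum_list (ys :: nat list)"
  by (induct xs ys rule: interleave.induct) auto

lemma evens_odds_interleave:
  "length ys \<le> length xs \<Longrightarrow> length xs \<le> Suc (length ys)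
     \<Longrightarrow> evens (interleave xs ys) = xs \<and> odds (interleave xs ys) = ys"
  by (induct xs ys rule: interleave.induct) auto

lemma hd0_odds: "hd0 (odds xs) = hd0 (tl xs)"
  by (cases xs; cases "tl xs") auto

lemma sorted_wrt_ge_Cons_hd0: "sorted_wrt (\<ge>) (a # xs) \<longleftrightarrow> hd0 xs \<le> a \<and> sorted_wrt (\<ge>) xs"
  by (cases xs) (auto simp: sorted_wrt2 transp_def)

lemma skip_sorted_iff_evens_odds:
  "skip_sorted xs \<longleftrightarrow> sorted_wrt (\<ge>) (evens xs) \<and> sorted_wrt (\<ge>) (odds xs)"
proof (induct xs)
  case (Cons a xs)
  then show ?case
    unfolding skip_sorted_Cons evens.simps(2) odds.simps(2) sorted_wrt_ge_Cons_hd0 hd0_odds by blast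
qed simp

definition distinct_partitions :: "nat \<Rightarrow> nat list set" where
  "distinct_partitions l = {p. is_distinct_partition p \<and> length p = l}"

lemma bij_betw_distinct_partitions:
  "bij_betw (\<lambda>(P, R). distinct_of_code (interleave P R))
     (padded_partitions ((l + 1) div 2) \<times> padded_partitions (l div 2)) (distinct_partitions l)"
proof (rule bij_betw_byWitness[where f' = "\<lambda>p. (evens (code_of_distinct p), odds (code_of_distinct p))"])
  show "\<forall>p\<in>distinct_partitions l.
      (\<lambda>(P, R). distinct_of_code (interleave P R)) (evens (code_of_distinct p), odds (code_of_distinct p)) = p"
    using distinct_of_code_of_distinct by (simp add: distinct_partitions_def interleave_evens_odds)
  show "\<forall>z\<in>padded_partitions ((l + 1) div 2) \<times> padded_partitions (l div 2).
      (\<lambda>p. (evens (code_of_distinct p), odds (code_of_distinct p)))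
        ((\<lambda>(P, R). distinct_of_code (interleave P R)) z) = z"
    by (auto simp: padded_partitions_def evens_odds_interleave)
  show "(\<lambda>(P, R). distinct_of_code (interleave P R))
      ` (padded_partitions ((l + 1) div 2) \<times> padded_partitions (l div 2)) \<subseteq> distinct_partitions l"
  proof clarify
    fix P R assume "P \<in> padded_partitions ((l + 1) div 2)" "R \<in> padded_partitions (l div 2)"
    then have "skip_sorted (interleave P R)" "length (interleave P R) = l"
      by (auto simp: padded_partitions_def skip_sorted_iff_evens_odds evens_odds_interleave)
    then show "distinct_of_code (interleave P R) \<in> distinct_partitions l"
      by (simp add: distinct_partitions_def distinct_partition_distinct_of_code)
  qed
  show "(\<lambda>p. (evens (code_of_distinct p), odds (code_of_distinct p))) ` distinct_partitions l
      \<subseteq> padded_partitions ((l + 1) div 2) \<times> padded_partitions (l div 2)"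
  proof (rule image_subsetI)
    fix p assume "p \<in> distinct_partitions l"
    then have "is_distinct_partition p" "length p = l" by (auto simp: distinct_partitions_def)
    then show "(evens (code_of_distinct p), odds (code_of_distinct p))
        \<in> padded_partitions ((l + 1) div 2) \<times> padded_partitions (l div 2)"
      using distinct_of_code_of_distinct[of p] length_evens_odds[of "code_of_distinct p"]
      by (simp add: padded_partitions_def skip_sorted_iff_evens_odds)
  qed
qed

lemma odd_pos_sum_interleave:
  assumes "(P, R) \<in> padded_partitions ((l + 1) div 2) \<times> padded_partitions (l div 2)"
  shows "odd_pos_sum (distinct_of_code (interleave P R)) = sum_list P + sum_list R + staircase_odd_sum l"
proof -
  have "length (interleave P R) = l" using assms by (simp add: padded_partitions_def)
  then show ?thesis by (simp add: odd_pos_sum_distinct_of_code)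
qed

lemma gen_fun_distinct_partitions:
  "gen_fun (distinct_partitions l) odd_pos_sum
     = fps_X ^ staircase_odd_sum l * (at_most_fps ((l + 1) div 2) * at_most_fps (l div 2))"
proof -
  let ?A = "padded_partitions ((l + 1) div 2) \<times> padded_partitions (l div 2)"
  have "gen_fun (distinct_partitions l) odd_pos_sum
      = gen_fun ?A (\<lambda>z. (\<lambda>(P, R). sum_list P + sum_list R) z + staircase_odd_sum l)"
    by (rule gen_fun_bij[OF bij_betw_distinct_partitions]) (auto simp: odd_pos_sum_interleave)
  also have "\<dots> = fps_X ^ staircase_odd_sum l * (at_most_fps ((l + 1) div 2) * at_most_fps (l div 2))"
    unfolding gen_fun_shift at_most_fps_def
    by (simp add: gen_fun_Times finite_fibres_padded_partitions)
  finally show ?thesis .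
qed

lemma finite_fibres_distinct_partitions: "finite_fibres (distinct_partitions l) odd_pos_sum"
proof -
  let ?A = "padded_partitions ((l + 1) div 2) \<times> padded_partitions (l div 2)"
  have "finite_fibres ?A (\<lambda>z. (\<lambda>(P, R). sum_list P + sum_list R) z + staircase_odd_sum l)"
    by (intro finite_fibres_shift finite_fibres_Times finite_fibres_padded_partitions)
  then show ?thesis
    by (subst finite_fibres_bij[OF bij_betw_distinct_partitions]) (auto simp: odd_pos_sum_interleave)
qed

lemma staircase_odd_sum_odd: "staircase_odd_sum (2 * m + 1) = (m + 1) * (m + 1)"
  by (simp add: staircase_odd_sum_def)

lemma staircase_odd_sum_even: "staircase_odd_sum (2 * m) = m * (m + 1)"
  by (simp add: staircase_odd_sum_def)

lemma staircase_odd_sum_ge: "l div 2 \<le> staircase_odd_sum l"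
proof -
  have "l div 2 \<le> (l + 1) div 2" by simp
  also have "\<dots> \<le> (l + 1) div 2 * ((l + 2) div 2)" by simp
  finally show ?thesis by (simp add: staircase_odd_sum_def)
qed

lemma staircase_le_odd_pos_sum:
  assumes "p \<in> distinct_partitions l"
  shows "staircase_odd_sum l \<le> odd_pos_sum p"
proof -
  have "is_distinct_partition p" "length p = l" using assms by (auto simp: distinct_partitions_def)
  then have "odd_pos_sum p = sum_list (code_of_distinct p) + staircase_odd_sum l"
    using distinct_of_code_of_distinct[of p] odd_pos_sum_distinct_of_code[of "code_of_distinct p"]
    by simp
  then show ?thesis by simp
qed

(* Even lengths are written 2 * m + 0 so that both parities are instances of the next lemma. *)
lemma distinct_partitions_parity_UN:
  "{p. is_distinct_partition p \<and> odd (length p)} = (\<Union>m. distinct_partitions (2 * m + 1))"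
  "{p. is_distinct_partition p \<and> even (length p)} = (\<Union>m. distinct_partitions (2 * m + 0))"
proof -
  have "odd n \<longleftrightarrow> (\<exists>m. n = 2 * m + 1)" for n :: nat
    by (auto elim!: oddE)
  moreover have "even n \<longleftrightarrow> (\<exists>m. n = 2 * m + 0)" for n :: nat
    by (auto simp: dvd_def)
  ultimately show "{p. is_distinct_partition p \<and> odd (length p)} = (\<Union>m. distinct_partitions (2 * m + 1))"
    "{p. is_distinct_partition p \<and> even (length p)} = (\<Union>m. distinct_partitions (2 * m + 0))"
    by (auto simp: distinct_partitions_def)
qed

lemma
  fixes b :: nat
  shows finite_fibres_distinct_parity: "finite_fibres (\<Union>m. distinct_partitions (2 * m + b)) odd_pos_sum"
    and gen_fun_distinct_parity_nth: "gen_fun (\<Union>m. distinct_partitions (2 * m + b)) odd_pos_sum $ n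
           = (\<Sum>m\<le>n. gen_fun (distinct_partitions (2 * m + b)) odd_pos_sum) $ n"
proof -
  have bound: "m \<le> odd_pos_sum p" if "p \<in> distinct_partitions (2 * m + b)" for m p
  proof -
    have "m \<le> (2 * m + b) div 2" by simp
    also have "\<dots> \<le> staircase_odd_sum (2 * m + b)" by (rule staircase_odd_sum_ge)
    also have "\<dots> \<le> odd_pos_sum p" using that by (rule staircase_le_odd_pos_sum)
    finally show ?thesis .
  qed
  show "finite_fibres (\<Union>m. distinct_partitions (2 * m + b)) odd_pos_sum"
    by (rule finite_fibres_UN[where A = "\<lambda>m. distinct_partitions (2 * m + b)"])
      (use bound finite_fibres_distinct_partitions in auto)
  have disj: "distinct_partitions (2 * i + b) \<inter> distinct_partitions (2 * j + b) = {}" if "i \<noteq> j" for i j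
    using that by (auto simp: distinct_partitions_def)
  show "gen_fun (\<Union>m. distinct_partitions (2 * m + b)) odd_pos_sum $ n
      = (\<Sum>m\<le>n. gen_fun (distinct_partitions (2 * m + b)) odd_pos_sum) $ n"
    by (rule gen_fun_UN_nth[where A = "\<lambda>m. distinct_partitions (2 * m + b)"])
      (use disj bound finite_fibres_distinct_partitions in auto)
qed

section \<open>Partitions of crank at most -1 and of crank 0\<close>

lemma length_filter_mono:
  assumes "\<And>x. P x \<Longrightarrow> Q x"
  shows "length (filter P xs) \<le> length (filter Q xs)"
proof -
  have "filter P xs = filter P (filter Q xs)" using assms by (induct xs) auto
  then show ?thesis by (metis length_filter_le)
qed

lemma nonincr_eq_filter_append:
  assumes "sorted_wrt (\<ge>) xs" "\<And>x y. P y \<Longrightarrow> y \<le> x \<Longrightarrow> P x"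
  shows "xs = filter P xs @ filter (\<lambda>x. \<not> P x) (xs :: nat list)"
  using assms(1)
proof (induct xs)
  case (Cons x xs)
  have srt: "sorted_wrt (\<ge>) xs" and le: "\<forall>y\<in>set xs. y \<le> x" using Cons.prems by auto
  show ?case
  proof (cases "P x")
    case True
    then show ?thesis using Cons.hyps[OF srt] by simp
  next
    case False
    then have "filter P xs = []" using le assms(2) by (auto simp: filter_empty_conv)
    moreover from this have "filter (\<lambda>x. \<not> P x) xs = xs" using Cons.hyps[OF srt] by simp
    ultimately show ?thesis using False by simp
  qed
qed simp

lemma nonincr_take_upward:
  assumes "sorted_wrt (\<ge>) xs" "\<And>x y. P y \<Longrightarrow> y \<le> x \<Longrightarrow> P x"
    and "n \<le> length (filter P xs)" "x \<in> set (take n xs)"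
  shows "P (x :: nat)"
proof -
  let ?F = "filter P xs" and ?G = "filter (\<lambda>x. \<not> P x) xs"
  have "take n xs = take n (?F @ ?G)"
    using nonincr_eq_filter_append[OF assms(1,2)] by simp
  also have "\<dots> = take n ?F" using assms(3) by simp
  finally have "x \<in> set ?F" using assms(4) by (metis in_set_takeD)
  then show ?thesis by simp
qed

lemma nonincr_drop_upward:
  assumes "sorted_wrt (\<ge>) xs" "\<And>x y. P y \<Longrightarrow> y \<le> x \<Longrightarrow> P x"
    and "length (filter P xs) \<le> n" "x \<in> set (drop n xs)"
  shows "\<not> P (x :: nat)"
proof -
  let ?F = "filter P xs" and ?G = "filter (\<lambda>x. \<not> P x) xs"
  have "drop n xs = drop n (?F @ ?G)"
    using nonincr_eq_filter_append[OF assms(1,2)] by simp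
  also have "\<dots> = drop (n - length ?F) ?G" using assms(3) by simp
  finally have "x \<in> set ?G" using assms(4) by (metis in_set_dropD)
  then show ?thesis by simp
qed

lemma sorted_wrt_ge_replicate: "sorted_wrt (\<ge>) (replicate n (x :: nat))"
  by (induct n) auto

lemma partition_eq_ones:
  assumes "is_partition p"
  shows "p = filter (\<lambda>x. 1 < x) p @ replicate (ones p) 1"
proof -
  have "p = filter (\<lambda>x. 1 < x) p @ filter (\<lambda>x. \<not> 1 < x) p"
    by (rule nonincr_eq_filter_append) (use assms in \<open>auto simp: is_partition_def\<close>)
  moreover have "filter (\<lambda>x. \<not> 1 < x) p = filter (\<lambda>x. x = 1) p"
    using assms by (auto simp: is_partition_def intro!: filter_cong)
  moreover have "filter (\<lambda>x. x = 1) p = filter (\<lambda>y. 1 = y) p"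
    by (rule filter_cong) auto
  moreover have "replicate (length (filter (\<lambda>y. 1 = y) p)) 1 = filter (\<lambda>y. 1 = y) p"
    by (rule replicate_length_filter)
  ultimately show ?thesis by (simp add: ones_def)
qed

lemma sgn_crank:
  assumes "is_partition p"
  shows "sgn (crank p) = sgn (int (length (filter (\<lambda>x. ones p < x) p)) - int (ones p))"
proof (cases "1 \<in> set p")
  case True
  then show ?thesis by (simp add: crank_def)
next
  case False
  then have ones: "ones p = 0" by (auto simp: ones_def filter_empty_conv)
  show ?thesis
  proof (cases "p = []")
    case True
    then show ?thesis by (simp add: crank_def ones_def)
  next
    case False
    then have "Max (set p) \<in> set p" by simp
    then have "0 < Max (set p)" using assms by (auto simp: is_partition_def)
    moreover have "filter (\<lambda>x. 0 < x) p = p" using assms by (simp add: is_partition_def)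
    ultimately show ?thesis using False \<open>1 \<notin> set p\<close> ones by (simp add: crank_def)
  qed
qed

lemma crank_le_neg1_iff:
  "is_partition p \<Longrightarrow> crank p \<le> -1 \<longleftrightarrow> length (filter (\<lambda>x. ones p < x) p) < ones p"
  using sgn_crank[of p] by (auto simp: sgn_if split: if_splits)

lemma crank_eq_0_iff:
  "is_partition p \<Longrightarrow> crank p = 0 \<longleftrightarrow> length (filter (\<lambda>x. ones p < x) p) = ones p"
  using sgn_crank[of p] by (auto simp: sgn_if split: if_splits)

definition assemble :: "nat \<Rightarrow> nat list \<Rightarrow> nat list \<Rightarrow> nat \<Rightarrow> nat list" where
  "assemble c T Y r = map (\<lambda>x. x + c) T @ Y @ replicate r 1"

lemma sum_list_assemble:
  "sum_list (assemble c T Y r) = sum_list T + length T * c + sum_list Y + r"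
  by (induct T) (auto simp: assemble_def sum_list_replicate)

lemma length_filter_assemble:
  "length (filter (\<lambda>x. t < x) (assemble c T Y r))
     = length (filter (\<lambda>x. t < x + c) T) + length (filter (\<lambda>x. t < x) Y) + (if t = 0 then r else 0)"
  by (simp add: assemble_def filter_map o_def filter_replicate)

lemma ones_assemble:
  "ones (assemble c T Y r) = length (filter (\<lambda>x. x + c = 1) T) + ones Y + r"
  by (simp add: ones_def assemble_def filter_map o_def filter_replicate)

lemma is_partition_assemble:
  assumes "1 \<le> c" "sorted_wrt (\<ge>) T" "sorted_wrt (\<ge>) Y" "\<forall>y\<in>set Y. 1 \<le> y \<and> y \<le> c"
  shows "is_partition (assemble c T Y r)"
  using assms by (auto simp: is_partition_def assemble_def sorted_wrt_append sorted_wrt_map sorted_wrt_ge_replicate)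

lemma inj_on_assemble: "inj_on (\<lambda>(T, Y). assemble c T Y r) (padded_partitions n \<times> B)"
proof (rule inj_onI, clarify)
  fix T Y T' Y'
  assume "T \<in> padded_partitions n" "T' \<in> padded_partitions n"
    and eq: "assemble c T Y r = assemble c T' Y' r"
  then have "length (map (\<lambda>x. x + c) T) = length (map (\<lambda>x. x + c) T')"
    by (simp add: padded_partitions_def)
  then have "map (\<lambda>x. x + c) T = map (\<lambda>x. x + c) T' \<and> Y = Y'"
    using eq by (simp add: assemble_def)
  moreover have "inj (\<lambda>x::nat. x + c)" by (simp add: inj_on_def)
  ultimately show "T = T' \<and> Y = Y'" by (simp add: inj_map_eq_map)
qed

definition neg_crank_family :: "nat \<Rightarrow> nat list set" where
  "neg_crank_family m = (\<lambda>(T, Y). assemble (Suc m) T Y (Suc m))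
     ` (padded_partitions m \<times> parts_between 1 (Suc m))"

definition crank_index :: "nat list \<Rightarrow> nat" where
  "crank_index p = (LEAST m. length (filter (\<lambda>x. Suc m < x) p) \<le> m)"

lemma length_filter_gt_assemble_neg:
  assumes "T \<in> padded_partitions m" "Y \<in> parts_between 1 (Suc m)" "Suc m \<le> t"
  shows "length (filter (\<lambda>x. t < x) (assemble (Suc m) T Y (Suc m))) \<le> m"
proof -
  have "filter (\<lambda>x. t < x) Y = []"
    using assms(2,3) by (auto simp: parts_between_def filter_empty_conv)
  moreover have "length (filter (\<lambda>x. t < x + Suc m) T) \<le> m"
    using assms(1) length_filter_le[of _ T] by (simp add: padded_partitions_def)
  ultimately show ?thesis using assms(3) by (simp add: length_filter_assemble)
qed

lemma crank_neg_assemble: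
  assumes "T \<in> padded_partitions m" "Y \<in> parts_between 1 (Suc m)"
  shows "is_partition (assemble (Suc m) T Y (Suc m)) \<and> crank (assemble (Suc m) T Y (Suc m)) \<le> -1"
proof -
  let ?p = "assemble (Suc m) T Y (Suc m)"
  have part: "is_partition ?p"
    using assms by (intro is_partition_assemble) (auto simp: padded_partitions_def parts_between_def)
  have "filter (\<lambda>x. x + Suc m = 1) T = []"
    using assms(1) by (cases m) (auto simp: padded_partitions_def filter_empty_conv)
  then have "ones ?p = ones Y + Suc m" by (simp add: ones_assemble)
  then have "length (filter (\<lambda>x. ones ?p < x) ?p) < ones ?p"
    using length_filter_gt_assemble_neg[OF assms, of "ones ?p"] by simp
  with part show ?thesis by (simp add: crank_le_neg1_iff)
qed

lemma crank_index_assemble: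
  assumes "T \<in> padded_partitions m" "Y \<in> parts_between 1 (Suc m)"
  shows "crank_index (assemble (Suc m) T Y (Suc m)) = m"
  unfolding crank_index_def
proof (rule Least_equality)
  let ?p = "assemble (Suc m) T Y (Suc m)"
  show "length (filter (\<lambda>x. Suc m < x) ?p) \<le> m"
    using length_filter_gt_assemble_neg[OF assms] by simp
  fix m' assume m': "length (filter (\<lambda>x. Suc m' < x) ?p) \<le> m'"
  show "m \<le> m'"
  proof (rule ccontr)
    assume "\<not> m \<le> m'"
    then have "filter (\<lambda>x. Suc m' < x + Suc m) T = T" by auto
    then have "m \<le> length (filter (\<lambda>x. Suc m' < x) ?p)"
      using assms(1) by (simp add: length_filter_assemble padded_partitions_def)
    with m' \<open>\<not> m \<le> m'\<close> show False by simp
  qed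
qed

lemma gen_fun_neg_crank_family:
  "gen_fun (neg_crank_family m) sum_list
     = fps_X ^ ((m + 1) * (m + 1)) * (at_most_fps m * at_most_fps (m + 1))"
proof -
  let ?A = "padded_partitions m \<times> parts_between 1 (Suc m)"
  have "(gen_fun (neg_crank_family m) sum_list :: int fps)
      = gen_fun ?A (\<lambda>z. (\<lambda>(T, Y). sum_list T + sum_list Y) z + (m + 1) * (m + 1))"
    unfolding neg_crank_family_def
    by (rule gen_fun_image[OF inj_on_assemble])
      (auto simp: padded_partitions_def sum_list_assemble algebra_simps)
  also have "\<dots> = fps_X ^ ((m + 1) * (m + 1))
      * (gen_fun (padded_partitions m) sum_list * gen_fun (parts_between 1 (Suc m)) sum_list)"
    unfolding gen_fun_shift
    by (simp add: gen_fun_Times finite_fibres_padded_partitions finite_fibres_parts_between)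
  finally show ?thesis
    by (simp only: at_most_fps_def[symmetric] gen_fun_parts_between_1 Suc_eq_plus1)
qed

lemma crank_index_bounds:
  assumes "is_partition p" "crank p \<le> -1"
  shows "Suc (crank_index p) \<le> ones p"
    and "length (filter (\<lambda>x. Suc (crank_index p) < x) p) \<le> crank_index p"
    and "crank_index p \<le> length (filter (\<lambda>x. crank_index p < x) p)"
proof -
  let ?Q = "\<lambda>m. length (filter (\<lambda>x. Suc m < x) p) \<le> m"
  have few: "length (filter (\<lambda>x. ones p < x) p) < ones p"
    using assms by (simp add: crank_le_neg1_iff)
  then have Q_ones: "?Q (ones p - 1)" by simp
  show "?Q (crank_index p)"
    unfolding crank_index_def by (rule LeastI[of ?Q, OF Q_ones])
  have "crank_index p \<le> ones p - 1"
    unfolding crank_index_def by (rule Least_le[of ?Q, OF Q_ones])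
  then show "Suc (crank_index p) \<le> ones p" using few by simp
  show "crank_index p \<le> length (filter (\<lambda>x. crank_index p < x) p)"
  proof (cases "crank_index p")
    case (Suc m)
    then have "\<not> ?Q m" unfolding crank_index_def by (metis lessI not_less_Least)
    then show ?thesis using Suc by simp
  qed simp
qed

lemma crank_index_take_drop:
  assumes "is_partition p" "crank p \<le> -1"
  defines "m \<equiv> crank_index p" and "H \<equiv> filter (\<lambda>x. 1 < x) p"
  shows "m \<le> length H" "\<forall>x\<in>set (take m H). Suc m \<le> x" "\<forall>x\<in>set (drop m H). x \<le> Suc m"
proof -
  note bounds = crank_index_bounds[OF assms(1,2), folded m_def]
  have srt: "sorted_wrt (\<ge>) p" using assms(1) by (simp add: is_partition_def)
  have pH: "p = H @ replicate (ones p) 1"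
    using partition_eq_ones[OF assms(1)] by (simp add: H_def)
  show mH: "m \<le> length H"
  proof (cases m)
    case (Suc m')
    have "length (filter (\<lambda>x. m < x) p) \<le> length H"
      unfolding H_def by (rule length_filter_mono) (simp add: Suc)
    then show ?thesis using bounds(3) by simp
  qed simp
  have "take m p = take m H" by (subst pH) (simp add: mH)
  then show "\<forall>x\<in>set (take m H). Suc m \<le> x"
    using nonincr_take_upward[OF srt _ bounds(3)] by (simp add: Suc_le_eq)
  have "drop m p = drop m H @ replicate (ones p) 1" by (subst pH) (simp add: mH)
  then show "\<forall>x\<in>set (drop m H). x \<le> Suc m"
    using nonincr_drop_upward[OF srt _ bounds(2)] by (simp add: not_less)
qed

lemma neg_crank_family_crank_index:
  assumes "is_partition p" "crank p \<le> -1"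
  shows "p \<in> neg_crank_family (crank_index p)"
proof -
  define m where "m = crank_index p"
  define k where "k = ones p"
  define H where "H = filter (\<lambda>x. 1 < x) p"
  note split = crank_index_take_drop[OF assms, folded m_def H_def]
  have srt: "sorted_wrt (\<ge>) H" using assms(1) by (simp add: H_def is_partition_def sorted_wrt_filter)
  define T where "T = map (\<lambda>x. x - Suc m) (take m H)"
  define Y where "Y = drop m H @ replicate (k - Suc m) 1"
  have mapT: "map (\<lambda>x. x + Suc m) T = take m H"
    unfolding T_def map_map o_def by (rule map_idI) (use split(2) in force)
  have rep: "replicate (k - Suc m) 1 @ replicate (Suc m) 1 = replicate k (1 :: nat)"
    using crank_index_bounds(1)[OF assms, folded m_def k_def] replicate_add[of "k - Suc m" "Suc m" "1 :: nat"]
    by simp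
  have "assemble (Suc m) T Y (Suc m) = take m H @ drop m H @ replicate k 1"
    unfolding assemble_def Y_def mapT rep[symmetric] by simp
  also have "\<dots> = H @ replicate k 1"
    by (simp only: append_assoc[symmetric] append_take_drop_id)
  also have "\<dots> = p"
    unfolding H_def k_def by (rule partition_eq_ones[OF assms(1), symmetric])
  finally have assembled: "assemble (Suc m) T Y (Suc m) = p" .
  have "sorted_wrt (\<ge>) T"
    unfolding T_def sorted_wrt_map by (rule sorted_wrt_mono_rel[OF _ sorted_wrt_take[OF srt]]) auto
  then have "T \<in> padded_partitions m"
    using split(1) by (simp add: T_def padded_partitions_def)
  moreover have "Y \<in> parts_between 1 (Suc m)"
    using sorted_wrt_drop[OF srt] split(3)
    by (auto simp: Y_def H_def parts_between_def sorted_wrt_append sorted_wrt_ge_replicate dest: in_set_dropD)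
  ultimately show ?thesis
    using assembled unfolding neg_crank_family_def m_def[symmetric] by force
qed

lemma neg_crank_UN: "{p. is_partition p \<and> crank p \<le> -1} = (\<Union>m. neg_crank_family m)"
  using neg_crank_family_crank_index crank_neg_assemble by (fastforce simp: neg_crank_family_def)

lemma crank_index_neg_crank_family: "p \<in> neg_crank_family m \<Longrightarrow> crank_index p = m"
  using crank_index_assemble by (auto simp: neg_crank_family_def)

lemma sum_list_assemble_ge: "length T = m \<Longrightarrow> m \<le> sum_list (assemble (Suc m) T Y r)"
  by (simp add: sum_list_assemble)

lemma gen_fun_neg_crank_nth:
  "gen_fun {p. is_partition p \<and> crank p \<le> -1} sum_list $ n
     = (\<Sum>m\<le>n. gen_fun (neg_crank_family m) sum_list) $ n"
  unfolding neg_crank_UN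
proof (rule gen_fun_UN_nth)
  show "neg_crank_family i \<inter> neg_crank_family j = {}" if "i \<noteq> j" for i j
    using that crank_index_neg_crank_family by blast
  show "m \<le> sum_list p" if "p \<in> neg_crank_family m" for m p
    using that sum_list_assemble_ge by (auto simp: neg_crank_family_def padded_partitions_def)
  show "finite_fibres (neg_crank_family m) sum_list" for m
    by (rule finite_fibres_subset[OF _ finite_fibres_partitions])
      (use crank_neg_assemble in \<open>auto simp: neg_crank_family_def\<close>)
qed

definition zero_crank_family :: "nat \<Rightarrow> nat list set" where
  "zero_crank_family k = (\<lambda>(T, B). assemble (Suc k) T B k) ` (padded_partitions k \<times> parts_between 2 k)"

lemma ones_assemble_zero:
  assumes "T \<in> padded_partitions k" "B \<in> parts_between 2 k"
  shows "ones (assemble (Suc k) T B k) = k"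
proof -
  have "filter (\<lambda>x. x + Suc k = 1) T = []"
    using assms(1) by (cases k) (auto simp: padded_partitions_def filter_empty_conv)
  moreover have "ones B = 0"
    using assms(2) by (auto simp: parts_between_def ones_def filter_empty_conv)
  ultimately show ?thesis by (simp add: ones_assemble)
qed

lemma crank_zero_assemble:
  assumes "T \<in> padded_partitions k" "B \<in> parts_between 2 k"
  shows "is_partition (assemble (Suc k) T B k) \<and> crank (assemble (Suc k) T B k) = 0"
proof -
  let ?p = "assemble (Suc k) T B k"
  have part: "is_partition ?p"
    using assms by (intro is_partition_assemble) (auto simp: padded_partitions_def parts_between_def)
  have "filter (\<lambda>x. k < x) B = []"
    using assms(2) by (auto simp: parts_between_def filter_empty_conv)
  then have "length (filter (\<lambda>x. k < x) ?p) = k"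
    using assms(1) by (simp add: length_filter_assemble padded_partitions_def)
  with part show ?thesis by (simp add: crank_eq_0_iff ones_assemble_zero[OF assms])
qed

lemma ones_filter_not_gt_ones: "ones (filter (\<lambda>x. \<not> ones p < x) p) = ones p"
proof (cases "ones p = 0")
  case True
  then show ?thesis by (auto simp: ones_def filter_empty_conv)
next
  case False
  then have "filter (\<lambda>x. x = 1) (filter (\<lambda>x. \<not> ones p < x) p) = filter (\<lambda>x. x = 1) p"
    by (auto intro!: filter_cong)
  then show ?thesis by (simp add: ones_def)
qed

lemma zero_crank_family_ones:
  assumes "is_partition p" "crank p = 0"
  shows "p \<in> zero_crank_family (ones p)"
proof -
  define k where "k = ones p"
  have cnt: "length (filter (\<lambda>x. k < x) p) = k"
    using assms by (simp add: crank_eq_0_iff k_def)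
  have srt: "sorted_wrt (\<ge>) p" using assms(1) by (simp add: is_partition_def)
  define G where "G = filter (\<lambda>x. k < x) p"
  define L where "L = filter (\<lambda>x. \<not> k < x) p"
  have pGL: "p = G @ L" unfolding G_def L_def by (rule nonincr_eq_filter_append[OF srt]) simp
  have partL: "is_partition L" using assms(1) by (auto simp: L_def is_partition_def sorted_wrt_filter)
  have "ones L = k" unfolding L_def k_def by (rule ones_filter_not_gt_ones)
  define B where "B = filter (\<lambda>x. 1 < x) L"
  have LB: "L = B @ replicate k 1"
    using partition_eq_ones[OF partL] \<open>ones L = k\<close> by (simp add: B_def)
  define T where "T = map (\<lambda>x. x - Suc k) G"
  have mapT: "map (\<lambda>x. x + Suc k) T = G"
    unfolding T_def map_map o_def by (rule map_idI) (simp add: G_def Suc_le_eq)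
  have "sorted_wrt (\<ge>) T"
    unfolding T_def G_def sorted_wrt_map by (rule sorted_wrt_mono_rel[OF _ sorted_wrt_filter[OF srt]]) auto
  then have "T \<in> padded_partitions k"
    using cnt by (simp add: T_def G_def padded_partitions_def)
  moreover have "B \<in> parts_between 2 k"
  proof -
    have "sorted_wrt (\<ge>) B" using partL unfolding B_def is_partition_def by (simp add: sorted_wrt_filter)
    then show ?thesis by (auto simp: B_def L_def parts_between_def)
  qed
  moreover have "assemble (Suc k) T B k = p"
    using pGL LB mapT by (simp add: assemble_def)
  ultimately show ?thesis unfolding zero_crank_family_def k_def[symmetric] by force
qed

lemma zero_crank_UN: "{p. is_partition p \<and> crank p = 0} = (\<Union>k. zero_crank_family k)"
  using zero_crank_family_ones crank_zero_assemble by (fastforce simp: zero_crank_family_def)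

lemma ones_zero_crank_family: "p \<in> zero_crank_family k \<Longrightarrow> ones p = k"
  using ones_assemble_zero by (auto simp: zero_crank_family_def)

lemma gen_fun_zero_crank_family:
  "gen_fun (zero_crank_family k) sum_list
     = fps_X ^ (k * k + 2 * k) * (at_most_fps k * gen_fun (parts_between 2 k) sum_list)"
proof -
  let ?A = "padded_partitions k \<times> parts_between 2 k"
  have "(gen_fun (zero_crank_family k) sum_list :: int fps)
      = gen_fun ?A (\<lambda>z. (\<lambda>(T, B). sum_list T + sum_list B) z + (k * k + 2 * k))"
    unfolding zero_crank_family_def
    by (rule gen_fun_image[OF inj_on_assemble])
      (auto simp: padded_partitions_def sum_list_assemble algebra_simps)
  also have "\<dots> = fps_X ^ (k * k + 2 * k) * (at_most_fps k * gen_fun (parts_between 2 k) sum_list)"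
    unfolding gen_fun_shift at_most_fps_def
    by (simp add: gen_fun_Times finite_fibres_padded_partitions finite_fibres_parts_between)
  finally show ?thesis .
qed

lemma gen_fun_zero_crank_nth:
  "gen_fun {p. is_partition p \<and> crank p = 0} sum_list $ n
     = (\<Sum>k\<le>n. gen_fun (zero_crank_family k) sum_list) $ n"
  unfolding zero_crank_UN
proof (rule gen_fun_UN_nth)
  show "zero_crank_family i \<inter> zero_crank_family j = {}" if "i \<noteq> j" for i j
    using that ones_zero_crank_family by blast
  show "k \<le> sum_list p" if "p \<in> zero_crank_family k" for k p
    using that by (auto simp: zero_crank_family_def padded_partitions_def sum_list_assemble)
  show "finite_fibres (zero_crank_family k) sum_list" for k
    by (rule finite_fibres_subset[OF _ finite_fibres_partitions])
      (use crank_zero_assemble in \<open>auto simp: zero_crank_family_def\<close>)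
qed

(* One step of the telescoping below, with Y = q^(a^2), q = q^a and W, W', W'' standing for
   W_(a-1), W_a, W_(a+1). *)
lemma telescoping_identity:
  fixes Y q x W W' W'' :: "'a :: comm_ring_1"
  assumes "W = (1 - q) * W'"
  shows "Y * W * (W - W') + (Y * q * (W' * W') - Y * q * q * x * (W'' * W') - Y * q * q * (W' * ((1 - x) * W')))
       = Y * q * q * x * W' * (W' - W'')"
  unfolding assms by (simp add: algebra_simps)

lemma at_most_fps_telescope:
  "(\<Sum>m\<le>N. fps_X ^ (m * (m + 1)) * (at_most_fps m * at_most_fps m)
          - fps_X ^ ((m + 1) * (m + 1)) * (at_most_fps (m + 1) * at_most_fps m)
          - fps_X ^ (m * m + 2 * m) * (at_most_fps m * gen_fun (parts_between 2 m) sum_list))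
     + fps_X
   = fps_X ^ ((N + 1) * (N + 1)) * at_most_fps N * (at_most_fps N - at_most_fps (N + 1))"
  (is "(\<Sum>m\<le>N. ?t m) + _ = ?R N")
proof (induct N)
  case 0
  show ?case by (simp add: at_most_fps_0 gen_fun_parts_between_2_0 algebra_simps)
next
  case (Suc N)
  define a where "a = Suc N"
  define Y where "Y = (fps_X :: int fps) ^ (a * a)"
  define q where "q = (fps_X :: int fps) ^ a"
  have W: "at_most_fps N = (1 - q) * at_most_fps a"
    unfolding q_def a_def by (rule at_most_fps_Suc[symmetric])
  have P: "gen_fun (parts_between 2 a) sum_list = (1 - fps_X) * at_most_fps a"
    by (rule gen_fun_parts_between_2) (simp add: a_def)
  have pow: "fps_X ^ (a * (a + 1)) = Y * q" "fps_X ^ ((a + 1) * (a + 1)) = Y * q * q * fps_X"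
      "fps_X ^ (a * a + 2 * a) = Y * q * q"
    unfolding Y_def q_def power_add[symmetric] power_Suc2[symmetric] by (simp_all add: algebra_simps mult_2)
  have "(\<Sum>m\<le>Suc N. ?t m) + fps_X = ((\<Sum>m\<le>N. ?t m) + fps_X) + ?t a"
    by (simp add: a_def)
  also have "(\<Sum>m\<le>N. ?t m) + fps_X = Y * at_most_fps N * (at_most_fps N - at_most_fps a)"
    unfolding Suc by (simp add: Y_def a_def)
  also have "?t a = Y * q * (at_most_fps a * at_most_fps a)
      - Y * q * q * fps_X * (at_most_fps (a + 1) * at_most_fps a)
      - Y * q * q * (at_most_fps a * ((1 - fps_X) * at_most_fps a))"
    unfolding pow P ..
  also have "Y * at_most_fps N * (at_most_fps N - at_most_fps a) + \<dots>
      = Y * q * q * fps_X * at_most_fps a * (at_most_fps a - at_most_fps (a + 1))"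
    by (rule telescoping_identity[OF W])
  also have "\<dots> = ?R (Suc N)"
    unfolding pow(2)[symmetric] a_def by simp
  finally show ?case .
qed

lemma at_most_fps_telescope_nth:
  "((\<Sum>m\<le>n. fps_X ^ (m * (m + 1)) * (at_most_fps m * at_most_fps m)
          - fps_X ^ ((m + 1) * (m + 1)) * (at_most_fps (m + 1) * at_most_fps m)
          - fps_X ^ (m * m + 2 * m) * (at_most_fps m * gen_fun (parts_between 2 m) sum_list))
     + fps_X) $ n = 0"
proof -
  have "n < (n + 1) * (n + 1)" by simp
  then show ?thesis
    unfolding at_most_fps_telescope mult.assoc fps_X_power_mult_nth by (simp only: if_True)
qed

lemma gen_fun_distinct_odd_eq_neg_crank:
  "gen_fun {p. is_distinct_partition p \<and> odd (length p)} odd_pos_sum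
     = (gen_fun {p. is_partition p \<and> crank p \<le> -1} sum_list :: int fps)"
proof (rule fps_ext)
  fix n
  have "gen_fun (distinct_partitions (2 * m + 1)) odd_pos_sum = (gen_fun (neg_crank_family m) sum_list :: int fps)"
    for m
    unfolding gen_fun_distinct_partitions gen_fun_neg_crank_family staircase_odd_sum_odd
    by (simp add: mult.commute)
  then show "gen_fun {p. is_distinct_partition p \<and> odd (length p)} odd_pos_sum $ n
      = (gen_fun {p. is_partition p \<and> crank p \<le> -1} sum_list :: int fps) $ n"
    unfolding distinct_partitions_parity_UN gen_fun_distinct_parity_nth gen_fun_neg_crank_nth by simp
qed

lemma gen_fun_distinct_even_minus_odd:
  "gen_fun {p. is_distinct_partition p \<and> even (length p)} odd_pos_sum
     - gen_fun {p. is_distinct_partition p \<and> odd (length p)} odd_pos_sum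
   = - fps_X + (gen_fun {p. is_partition p \<and> crank p = 0} sum_list :: int fps)"
proof (rule fps_ext)
  fix n :: nat
  let ?e = "\<lambda>m. gen_fun (distinct_partitions (2 * m + 0)) odd_pos_sum :: int fps"
  let ?o = "\<lambda>m. gen_fun (distinct_partitions (2 * m + 1)) odd_pos_sum :: int fps"
  let ?z = "\<lambda>m. gen_fun (zero_crank_family m) sum_list :: int fps"
  have summand: "?e m - ?o m - ?z m
      = fps_X ^ (m * (m + 1)) * (at_most_fps m * at_most_fps m)
        - fps_X ^ ((m + 1) * (m + 1)) * (at_most_fps (m + 1) * at_most_fps m)
        - fps_X ^ (m * m + 2 * m) * (at_most_fps m * gen_fun (parts_between 2 m) sum_list)" for m
    unfolding add_0_right gen_fun_distinct_partitions staircase_odd_sum_even staircase_odd_sum_odd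
      gen_fun_zero_crank_family by simp
  have "((\<Sum>m\<le>n. ?e m - ?o m - ?z m) + fps_X) $ n = 0"
    unfolding summand by (rule at_most_fps_telescope_nth)
  then have "(\<Sum>m\<le>n. ?e m) $ n - (\<Sum>m\<le>n. ?o m) $ n - (\<Sum>m\<le>n. ?z m) $ n + fps_X $ n = 0"
    by (simp only: sum_subtractf fps_add_nth fps_sub_nth)
  then show "(gen_fun {p. is_distinct_partition p \<and> even (length p)} odd_pos_sum
      - gen_fun {p. is_distinct_partition p \<and> odd (length p)} odd_pos_sum) $ n
      = (- fps_X + (gen_fun {p. is_partition p \<and> crank p = 0} sum_list :: int fps)) $ n"
    unfolding distinct_partitions_parity_UN fps_sub_nth fps_add_nth fps_neg_nth
      gen_fun_distinct_parity_nth gen_fun_zero_crank_nth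
    by linarith
qed

lemma sum_sign_distinct_partitions:
  "(\<Sum>p\<in>{p. is_distinct_partition p \<and> odd_pos_sum p = n}. (-1::int) ^ length p)
     = gen_fun {p. is_distinct_partition p \<and> even (length p)} odd_pos_sum $ n
       - gen_fun {p. is_distinct_partition p \<and> odd (length p)} odd_pos_sum $ n"
proof -
  let ?E = "{p. is_distinct_partition p \<and> even (length p) \<and> odd_pos_sum p = n}"
  let ?O = "{p. is_distinct_partition p \<and> odd (length p) \<and> odd_pos_sum p = n}"
  have fin: "finite ?E" "finite ?O"
    using finite_fibres_distinct_parity[of 0] finite_fibres_distinct_parity[of 1]
    unfolding distinct_partitions_parity_UN[symmetric] finite_fibres_def by (simp_all add: conj_assoc)
  have "{p. is_distinct_partition p \<and> odd_pos_sum p = n} = ?E \<union> ?O" by auto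
  then have "(\<Sum>p\<in>{p. is_distinct_partition p \<and> odd_pos_sum p = n}. (-1::int) ^ length p)
      = (\<Sum>p\<in>?E. (-1) ^ length p) + (\<Sum>p\<in>?O. (-1) ^ length p)"
    using fin by (simp add: sum.union_disjoint disjoint_iff)
  also have "\<dots> = int (card ?E) - int (card ?O)"
    by (simp add: sum.cong[of ?E ?E _ "\<lambda>_. 1"] sum.cong[of ?O ?O _ "\<lambda>_. -1"])
  finally show ?thesis by (simp add: gen_fun_def conj_assoc)
qed

theorem theorem15:
  shows "Abs_fps (\<lambda>n. of_nat (card {p. is_distinct_partition p \<and> odd (nparts p) \<and> odd_pos_sum p = n}))
           = (Abs_fps (\<lambda>n. of_nat (card {p. is_partition p \<and> crank p \<le> -1 \<and> psize p = n})) :: int fps)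
       \<and> Abs_fps (\<lambda>n. \<Sum>p\<in>{p. is_distinct_partition p \<and> odd_pos_sum p = n}. (-1) ^ nparts p)
           = - fps_X + (Abs_fps (\<lambda>n. of_nat (card {p. is_partition p \<and> crank p = 0 \<and> psize p = n})) :: int fps)"
proof
  show "Abs_fps (\<lambda>n. of_nat (card {p. is_distinct_partition p \<and> odd (nparts p) \<and> odd_pos_sum p = n}))
      = (Abs_fps (\<lambda>n. of_nat (card {p. is_partition p \<and> crank p \<le> -1 \<and> psize p = n})) :: int fps)"
    using gen_fun_distinct_odd_eq_neg_crank by (simp add: gen_fun_def conj_assoc)
  have "Abs_fps (\<lambda>n. \<Sum>p\<in>{p. is_distinct_partition p \<and> odd_pos_sum p = n}. (-1::int) ^ nparts p)
      = gen_fun {p. is_distinct_partition p \<and> even (length p)} odd_pos_sum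
        - gen_fun {p. is_distinct_partition p \<and> odd (length p)} odd_pos_sum"
    by (rule fps_ext) (simp add: sum_sign_distinct_partitions)
  then show "Abs_fps (\<lambda>n. \<Sum>p\<in>{p. is_distinct_partition p \<and> odd_pos_sum p = n}. (-1) ^ nparts p)
      = - fps_X + (Abs_fps (\<lambda>n. of_nat (card {p. is_partition p \<and> crank p = 0 \<and> psize p = n})) :: int fps)"
    using gen_fun_distinct_even_minus_odd by (simp add: gen_fun_def conj_assoc)
qed

end
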